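(* Let $\mathcal{P}$ be a topological property that is closed hereditary (i.e., every closed subspace of a space with $\mathcal{P}$ has $\mathcal{P}$). If a topological space $X$ is dense-$\mathcal{P}$, then $X$ is hereditarily $\mathcal{P}$, i.e., every subspace of $X$ has $\mathcal{P}$.
   Context: For a topological property $\mathcal{P}$, a space $X$ is called dense-$\mathcal{P}$ if every dense subset of $X$ (with the subspace topology) has $\mathcal{P}$. No separation axioms are assumed. *)

theory Defs
  imports "HOL-Analysis.Analysis"
begin

definition topological_property :: "('a topology \<Rightarrow> bool) \<Rightarrow> bool" where
  "topological_property P \<longleftrightarrow>
     (\<forall>X Y. X homeomorphic_space Y \<longrightarrow> (P X \<longleftrightarrow> P Y))"

definition closed_hereditary :: "('a topology \<Rightarrow> bool) \<Rightarrow> bool" where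
  "closed_hereditary P \<longleftrightarrow>
     (\<forall>X S. P X \<and> closedin X S \<longrightarrow> P (subtopology X S))"

definition dense_P :: "('a topology \<Rightarrow> bool) \<Rightarrow> 'a topology \<Rightarrow> bool" where
  "dense_P P X \<longleftrightarrow>
     (\<forall>D. D \<subseteq> topspace X \<and> X closure_of D = topspace X \<longrightarrow> P (subtopology X D))"

definition hereditarily_P :: "('a topology \<Rightarrow> bool) \<Rightarrow> 'a topology \<Rightarrow> bool" where
  "hereditarily_P P X \<longleftrightarrow>
     (\<forall>S. S \<subseteq> topspace X \<longrightarrow> P (subtopology X S))"

end

theory Submission
  imports Defs
begin

text \<open>Every subspace S is closed in the dense subspace S \<union> (X - cl S): the closure of S adds
  nothing, since the complement of cl S is open and misses S. So S inherits P from a dense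
  subspace.\<close>

lemma closure_of_Un_complement_closure_of:
  assumes "S \<subseteq> topspace X"
  shows "X closure_of (S \<union> (topspace X - X closure_of S)) = topspace X"
proof
  show "X closure_of (S \<union> (topspace X - X closure_of S)) \<subseteq> topspace X"
    by (rule closure_of_subset_topspace)
  have "X closure_of S \<subseteq> X closure_of (S \<union> (topspace X - X closure_of S))"
    by (rule closure_of_mono) blast
  moreover have "topspace X - X closure_of S \<subseteq> X closure_of (S \<union> (topspace X - X closure_of S))"
    using closure_of_subset[of "S \<union> (topspace X - X closure_of S)" X] assms by blast
  ultimately show "topspace X \<subseteq> X closure_of (S \<union> (topspace X - X closure_of S))"
    by blast
qed

lemma closedin_subtopology_Un_complement_closure_of:
  assumes "S \<subseteq> topspace X"
  shows "closedin (subtopology X (S \<union> (topspace X - X closure_of S))) S"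
  unfolding closedin_subtopology
  using closure_of_subset[OF assms] assms
  by (intro exI[of _ "X closure_of S"]) auto

lemma closed_hereditary_subtopology:
  assumes "closed_hereditary P" and "P (subtopology X D)" and "S \<subseteq> D"
    and "closedin (subtopology X D) S"
  shows "P (subtopology X S)"
proof -
  have "P (subtopology (subtopology X D) S)"
    using assms by (auto simp: closed_hereditary_def)
  with \<open>S \<subseteq> D\<close> show ?thesis
    by (simp add: subtopology_subtopology Int_absorb1)
qed

theorem theorem2p1:
  fixes P :: "'a topology \<Rightarrow> bool" and X :: "'a topology"
  assumes "topological_property P"
    and "closed_hereditary P"
    and "dense_P P X"
  shows "hereditarily_P P X"
  unfolding hereditarily_P_def
proof (intro allI impI)
  fix S assume S: "S \<subseteq> topspace X"
  define D where "D = S \<union> (topspace X - X closure_of S)"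
  have "D \<subseteq> topspace X" using S by (auto simp: D_def)
  moreover have "X closure_of D = topspace X"
    unfolding D_def using S by (rule closure_of_Un_complement_closure_of)
  ultimately have "P (subtopology X D)"
    using assms(3) by (auto simp: dense_P_def)
  moreover have "closedin (subtopology X D) S"
    unfolding D_def using S by (rule closedin_subtopology_Un_complement_closure_of)
  moreover have "S \<subseteq> D" by (auto simp: D_def)
  ultimately show "P (subtopology X S)"
    using assms(2) closed_hereditary_subtopology by blast
qed

end
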